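(* For all integers $q \ge d \ge 2$, $B(q,d,2) = \left\lceil \frac{q-1}{d-1}\right\rceil$; that is, for every $f:\binom{[q]}{d}\to\{0,1\}$ there are $b=\lceil \frac{q-1}{d-1}\rceil$ sets $S_1,\dots,S_b\in\binom{[q]}{d}$ with $S_1\cup\dots\cup S_b=[q]$ on which $f$ is constant, and this number cannot be decreased in general.
   Context: $\binom{[q]}{d}$ denotes the family of $d$-element subsets of $[q]=\{1,\dots,q\}$. A function $f:\binom{[q]}{d}\to[c]$ has a $t$-cover if there exist $S_1,\dots,S_t\in\binom{[q]}{d}$ (not necessarily distinct) with $S_1\cup\dots\cup S_t=[q]$ and $f(S_1)=\dots=f(S_t)$. $B(q,d,c)$ is the minimum $t$ such that every $f:\binom{[q]}{d}\to[c]$ has a $t$-cover. *)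

theory Defs
  imports Complex_Main
begin

definition ksubsets :: "nat \<Rightarrow> nat \<Rightarrow> nat set set" where
  "ksubsets q d = {S. S \<subseteq> {1..q} \<and> card S = d}"

(* f has a t-cover: S_1..S_t (indexed 0..t-1, not necessarily distinct) in \binom{[q]}{d}
   covering [q] with f constant on them *)
definition has_t_cover :: "nat \<Rightarrow> nat \<Rightarrow> (nat set \<Rightarrow> nat) \<Rightarrow> nat \<Rightarrow> bool" where
  "has_t_cover q d f t \<longleftrightarrow>
     (\<exists>S :: nat \<Rightarrow> nat set.
        (\<forall>i<t. S i \<in> ksubsets q d) \<and>
        (\<Union>i<t. S i) = {1..q} \<and>
        (\<forall>i<t. \<forall>j<t. f (S i) = f (S j)))"

(* B(q,d,c): least t such that every f : \binom{[q]}{d} \<rightarrow> [c] has a t-cover.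
   Only the values of f on \binom{[q]}{d} matter. *)
definition B :: "nat \<Rightarrow> nat \<Rightarrow> nat \<Rightarrow> nat" where
  "B q d c = (LEAST t. \<forall>f :: nat set \<Rightarrow> nat.
                 (\<forall>S\<in>ksubsets q d. f S \<in> {1..c}) \<longrightarrow> has_t_cover q d f t)"

end

theory Submission
  imports Defs
begin

text \<open>
  Upper bound: exchanging the elements of one d-set for those of another one at a time shows that
  if a 2-colouring of the d-subsets of Y is not constant, some (d-1)-set Z has two one-point
  extensions of different colours. Then every colour occurring on Y is realised by some Z + y, so
  after covering Y - Z monochromatically (inside Y) with m - 1 sets, one set Z + y of the same
  colour covers Z. Each step removes d - 1 points, so m sets cover m(d-1) + 1 points.

  Lower bound: colour a d-set by whether it contains 1. In a monochromatic cover some set, hence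
  every set, contains 1, so t sets cover at most t(d-1) + 1 points.
\<close>

lemma exchange_pair_with_distinct_values:
  assumes "finite A" "finite Q" "card A = card Q" "f A \<noteq> f Q"
  shows "\<exists>Z y1 y2. Z \<subseteq> A \<union> Q \<and> y1 \<in> A \<union> Q \<and> y2 \<in> A \<union> Q \<and> y1 \<notin> Z \<and> y2 \<notin> Z
           \<and> card Z = card A - 1 \<and> f (insert y1 Z) \<noteq> f (insert y2 Z)"
  using assms
proof (induction "card (A - Q)" arbitrary: A rule: less_induct)
  case less
  have "\<not> A \<subseteq> Q"
    using less.prems card_subset_eq[of Q A] by auto
  then obtain a where a: "a \<in> A" "a \<notin> Q" by blast
  have "card (Q - A) = card (A - Q)"
    using less.prems by (simp add: card_Diff_subset_Int Int_commute)
  then have "Q - A \<noteq> {}"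
    using a less.prems by (metis Diff_iff card_0_eq empty_iff finite_Diff)
  then obtain b where b: "b \<in> Q" "b \<notin> A" by blast
  define C where "C = insert b (A - {a})"
  have card_C: "card C = card A"
    using a b less.prems card_gt_0_iff[of A] unfolding C_def by (auto simp: card_insert_if)
  show ?case
  proof (cases "f C = f A")
    case False
    then have "f (insert b (A - {a})) \<noteq> f (insert a (A - {a}))"
      using a unfolding C_def by (simp add: insert_absorb)
    then show ?thesis
      using a b less.prems by (intro exI[of _ "A - {a}"] exI[of _ b] exI[of _ a]) auto
  next
    case True
    have "card ((A - Q) - {a}) < card (A - Q)"
      by (rule card_Diff1_less) (use a less.prems in auto)
    moreover have "C - Q = (A - Q) - {a}"
      unfolding C_def using a b by blast
    ultimately have smaller: "card (C - Q) < card (A - Q)"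
      by simp
    have "finite C"
      unfolding C_def using less.prems by simp
    moreover have "card C = card Q" "f C \<noteq> f Q"
      using card_C less.prems(3,4) True by simp_all
    ultimately obtain Z y1 y2 where "Z \<subseteq> C \<union> Q" "y1 \<in> C \<union> Q" "y2 \<in> C \<union> Q" "y1 \<notin> Z" "y2 \<notin> Z"
        "card Z = card C - 1" "f (insert y1 Z) \<noteq> f (insert y2 Z)"
      using less.hyps[OF smaller _ less.prems(2)] by blast
    moreover have "C \<union> Q \<subseteq> A \<union> Q"
      unfolding C_def using b by blast
    ultimately show ?thesis
      using card_C by (intro exI[of _ Z] exI[of _ y1] exI[of _ y2]) auto
  qed
qed

lemma exists_pivot_of_two_valued:
  assumes "finite Y" "0 < d" "d \<le> card Y"
    and two_valued: "\<forall>T. T \<subseteq> Y \<longrightarrow> card T = d \<longrightarrow> f T \<in> {a, b}"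
  shows "\<exists>Z. Z \<subseteq> Y \<and> card Z = d - 1 \<and>
           (\<forall>T. T \<subseteq> Y \<longrightarrow> card T = d \<longrightarrow> (\<exists>y \<in> Y - Z. f (insert y Z) = f T))"
proof (cases "\<exists>T1 T2. T1 \<subseteq> Y \<and> T2 \<subseteq> Y \<and> card T1 = d \<and> card T2 = d \<and> f T1 \<noteq> f T2")
  case True
  then obtain T1 T2 where T: "T1 \<subseteq> Y" "T2 \<subseteq> Y" "card T1 = d" "card T2 = d" "f T1 \<noteq> f T2"
    by blast
  then have "finite T1" "finite T2"
    using \<open>finite Y\<close> finite_subset by auto
  with T obtain Z y1 y2 where Z: "Z \<subseteq> Y" "y1 \<in> Y" "y2 \<in> Y" "y1 \<notin> Z" "y2 \<notin> Z"
      "card Z = d - 1" "f (insert y1 Z) \<noteq> f (insert y2 Z)"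
    using exchange_pair_with_distinct_values[of T1 T2 f] T(1,2) by (metis le_sup_iff subset_iff)
  have "finite Z"
    using Z(1) \<open>finite Y\<close> finite_subset by blast
  then have "card (insert y1 Z) = d" "card (insert y2 Z) = d"
    using Z(4-6) \<open>0 < d\<close> by simp_all
  then have "f (insert y1 Z) \<in> {a, b}" "f (insert y2 Z) \<in> {a, b}"
    using two_valued Z(1-3) by simp_all
  have "\<exists>y \<in> Y - Z. f (insert y Z) = f T" if "T \<subseteq> Y" "card T = d" for T
  proof -
    have "f T \<in> {a, b}"
      using two_valued that by blast
    with Z(7) \<open>f (insert y1 Z) \<in> {a, b}\<close> \<open>f (insert y2 Z) \<in> {a, b}\<close>
    have "f T = f (insert y1 Z) \<or> f T = f (insert y2 Z)"
      by auto
    then show ?thesis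
      using Z(2-5) by auto
  qed
  then show ?thesis
    using Z(1,6) by blast
next
  case False
  have "d - 1 \<le> card Y"
    using \<open>d \<le> card Y\<close> by simp
  then obtain Z where Z: "Z \<subseteq> Y" "card Z = d - 1" "finite Z"
    by (rule obtain_subset_with_card_n)
  then have "\<not> Y \<subseteq> Z"
    using assms(2,3) card_mono by fastforce
  then obtain y where y: "y \<in> Y - Z" by blast
  then have "insert y Z \<subseteq> Y" "card (insert y Z) = d"
    using Z \<open>0 < d\<close> by auto
  then have "f (insert y Z) = f T" if "T \<subseteq> Y" "card T = d" for T
    using False that by metis
  then show ?thesis
    using Z(1,2) y by (intro exI[of _ Z]) auto
qed

lemma two_valued_monochromatic_cover:
  assumes "finite U" "Y \<subseteq> U" "0 < d" "d \<le> card U" "0 < m" "card Y \<le> m * (d - 1) + 1"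
    and "\<forall>T. T \<subseteq> U \<longrightarrow> card T = d \<longrightarrow> f T \<in> {a, b}"
  shows "\<exists>S c. (\<forall>i<m. S i \<subseteq> U \<and> card (S i) = d \<and> f (S i) = c) \<and> Y \<subseteq> (\<Union>i<m. S i)"
  using assms
proof (induction "card Y" arbitrary: U Y m rule: less_induct)
  case less
  show ?case
  proof (cases "card Y \<le> d")
    case True
    then obtain T where T: "Y \<subseteq> T" "T \<subseteq> U" "card T = d"
      using exists_subset_between less.prems(1,2,4) by blast
    then show ?thesis
      using \<open>0 < m\<close> by (intro exI[of _ "\<lambda>_. T"] exI[of _ "f T"]) auto
  next
    case False
    have "finite Y"
      using less.prems(1,2) finite_subset by blast
    obtain m' where "m = Suc m'"
      using \<open>0 < m\<close> gr0_implies_Suc by blast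
    moreover have "m' \<noteq> 0"
    proof
      assume "m' = 0"
      then have "card Y \<le> d"
        using less.prems(6) \<open>0 < d\<close> \<open>m = Suc m'\<close> by simp
      with False show False ..
    qed
    ultimately have m': "m = Suc m'" "0 < m'"
      by simp_all
    have two_valued_Y: "\<forall>T. T \<subseteq> Y \<longrightarrow> card T = d \<longrightarrow> f T \<in> {a, b}"
      using less.prems(2,7) by blast
    obtain Z where Z: "Z \<subseteq> Y" "card Z = d - 1"
        and pivot: "\<And>T. T \<subseteq> Y \<Longrightarrow> card T = d \<Longrightarrow> \<exists>y \<in> Y - Z. f (insert y Z) = f T"
      using exists_pivot_of_two_valued[OF \<open>finite Y\<close> \<open>0 < d\<close> _ two_valued_Y] False by auto
    have "card (Y - Z) = card Y - (d - 1)"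
      using Z \<open>finite Y\<close> by (simp add: card_Diff_subset finite_subset)
    moreover have "2 \<le> d"
      using False less.prems(6) \<open>0 < d\<close> by (cases "d = 1") auto
    ultimately have "card (Y - Z) < card Y" "card (Y - Z) \<le> m' * (d - 1) + 1"
      using False less.prems(6) m'(1) by auto
    \<comment> \<open>The recursive cover is taken inside Y, so that the pivot applies to its colour.\<close>
    then have "\<exists>S c. (\<forall>i<m'. S i \<subseteq> Y \<and> card (S i) = d \<and> f (S i) = c) \<and> Y - Z \<subseteq> (\<Union>i<m'. S i)"
      using False \<open>finite Y\<close> \<open>0 < d\<close> \<open>0 < m'\<close> two_valued_Y
      by (intro less.hyps) auto
    then obtain S c where S: "\<forall>i<m'. S i \<subseteq> Y \<and> card (S i) = d \<and> f (S i) = c"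
        and covers: "Y - Z \<subseteq> (\<Union>i<m'. S i)"
      by blast
    obtain y where y: "y \<in> Y - Z" "f (insert y Z) = c"
      using pivot S \<open>0 < m'\<close> by metis
    have "card (insert y Z) = d"
      using y Z \<open>finite Y\<close> \<open>2 \<le> d\<close> finite_subset by fastforce
    then have "\<forall>i<m. (S(m' := insert y Z)) i \<subseteq> U \<and> card ((S(m' := insert y Z)) i) = d
                 \<and> f ((S(m' := insert y Z)) i) = c"
      using S y Z(1) less.prems(2) m'(1) by (auto simp: less_Suc_eq)
    moreover have "Y \<subseteq> (\<Union>i<m. (S(m' := insert y Z)) i)"
      using covers m'(1) by (auto simp: lessThan_Suc)
    ultimately show ?thesis
      by blast
  qed
qed

lemma card_UN_sharing_point_le:
  assumes "\<And>i. i < t \<Longrightarrow> finite (S i) \<and> card (S i) = d \<and> x \<in> S i"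
  shows "card (\<Union>i<t. S i) \<le> t * (d - 1) + 1"
proof -
  define W where "W = (\<Union>i<t. S i - {x})"
  have "card W \<le> (\<Sum>i<t. card (S i - {x}))"
    unfolding W_def by (rule card_UN_le) simp
  also have "\<dots> = t * (d - 1)"
    using assms by simp
  finally have "card W \<le> t * (d - 1)" .
  have "finite W"
    unfolding W_def using assms by simp
  then have "card (\<Union>i<t. S i) \<le> card (insert x W)"
    unfolding W_def by (intro card_mono) auto
  also have "\<dots> \<le> card W + 1"
    using \<open>finite W\<close> by (simp add: card_insert_if)
  finally show ?thesis
    using \<open>card W \<le> t * (d - 1)\<close> by simp
qed

lemma has_t_cover_mem_one_colouring_le:
  assumes "1 \<le> q" "has_t_cover q d (\<lambda>S. if 1 \<in> S then 1 else 2) t"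
  shows "q \<le> t * (d - 1) + 1"
proof -
  obtain S where S: "\<forall>i<t. S i \<in> ksubsets q d" "(\<Union>i<t. S i) = {1..q}"
      and same: "\<forall>i<t. \<forall>j<t. (if 1 \<in> S i then 1 else 2 :: nat) = (if 1 \<in> S j then 1 else 2)"
    using assms(2) unfolding has_t_cover_def by blast
  obtain i0 where "i0 < t" "1 \<in> S i0"
    using S(2) \<open>1 \<le> q\<close> by (metis UN_E atLeastAtMost_iff lessThan_iff order_refl)
  have "1 \<in> S i" if "i < t" for i
  proof -
    have "(if 1 \<in> S i then 1 else 2 :: nat) = (if 1 \<in> S i0 then 1 else 2)"
      using same that \<open>i0 < t\<close> by blast
    with \<open>1 \<in> S i0\<close> show ?thesis
      by (cases "1 \<in> S i") simp_all
  qed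
  moreover have "finite (S i) \<and> card (S i) = d" if "i < t" for i
    using S(1) that unfolding ksubsets_def by (auto intro: finite_subset)
  ultimately have "card (\<Union>i<t. S i) \<le> t * (d - 1) + 1"
    by (intro card_UN_sharing_point_le) simp
  then show ?thesis
    using S(2) by simp
qed

lemma has_t_cover_if_two_valued:
  assumes "0 < d" "d \<le> q" "0 < t" "q \<le> t * (d - 1) + 1"
    and "\<forall>S\<in>ksubsets q d. f S \<in> {a, b}"
  shows "has_t_cover q d f t"
proof -
  have two_valued: "\<forall>T. T \<subseteq> {1..q} \<longrightarrow> card T = d \<longrightarrow> f T \<in> {a, b}"
    using assms(5) unfolding ksubsets_def by blast
  have "d \<le> card {1..q}" "card {1..q} \<le> t * (d - 1) + 1"
    using assms(2,4) by simp_all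
  from two_valued_monochromatic_cover[OF finite_atLeastAtMost order_refl \<open>0 < d\<close> this(1) \<open>0 < t\<close>
      this(2) two_valued]
  obtain S c where S: "\<forall>i<t. S i \<subseteq> {1..q} \<and> card (S i) = d \<and> f (S i) = c"
      and "{1..q} \<subseteq> (\<Union>i<t. S i)"
    by blast
  then have "(\<Union>i<t. S i) = {1..q}"
    by blast
  with S show ?thesis
    unfolding has_t_cover_def ksubsets_def by auto
qed

lemma two_colour_cover_iff:
  assumes "2 \<le> d" "d \<le> q"
  shows "(\<forall>f :: nat set \<Rightarrow> nat. (\<forall>S\<in>ksubsets q d. f S \<in> {1..2}) \<longrightarrow> has_t_cover q d f t)
         \<longleftrightarrow> q - 1 \<le> t * (d - 1)"
proof
  assume "\<forall>f :: nat set \<Rightarrow> nat. (\<forall>S\<in>ksubsets q d. f S \<in> {1..2}) \<longrightarrow> has_t_cover q d f t"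
  then have "has_t_cover q d (\<lambda>S. if 1 \<in> S then 1 else 2) t"
    by simp
  then have "q \<le> t * (d - 1) + 1"
    using has_t_cover_mem_one_colouring_le assms by simp
  then show "q - 1 \<le> t * (d - 1)"
    by simp
next
  assume t: "q - 1 \<le> t * (d - 1)"
  then have "0 < t"
    using assms by (cases t) auto
  have "{1..2 :: nat} = {1, 2}"
    by auto
  then show "\<forall>f :: nat set \<Rightarrow> nat. (\<forall>S\<in>ksubsets q d. f S \<in> {1..2}) \<longrightarrow> has_t_cover q d f t"
    using has_t_cover_if_two_valued[of d q t] assms t \<open>0 < t\<close> by auto
qed

lemma Least_le_mult_eq_ceiling:
  assumes "0 < k"
  shows "int (LEAST t. n \<le> t * k) = \<lceil>real n / real k\<rceil>"
proof -
  define c where "c = \<lceil>real n / real k\<rceil>"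
  have iff: "n \<le> t * k \<longleftrightarrow> c \<le> int t" for t
    using assms unfolding c_def by (simp add: ceiling_le_iff pos_divide_le_eq flip: of_nat_mult)
  have "0 \<le> real n / real k"
    by simp
  then have "0 \<le> c"
    unfolding c_def zero_le_ceiling by linarith
  have "(LEAST t. n \<le> t * k) = nat c"
  proof (rule Least_equality)
    show "n \<le> nat c * k"
      using iff \<open>0 \<le> c\<close> by simp
    show "nat c \<le> t" if "n \<le> t * k" for t
      using iff[of t] that by (simp add: nat_le_iff)
  qed
  then show ?thesis
    using \<open>0 \<le> c\<close> unfolding c_def by simp
qed

theorem lemmaA1:
  fixes q d :: nat
  assumes "2 \<le> d" and "d \<le> q"
  shows "int (B q d 2) = ceiling (real (q - 1) / real (d - 1))"
proof -
  have "B q d 2 = (LEAST t. q - 1 \<le> t * (d - 1))"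
    unfolding B_def using two_colour_cover_iff[OF assms] by simp
  then show ?thesis
    using Least_le_mult_eq_ceiling[of "d - 1" "q - 1"] assms(1) by simp
qed

end
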